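(* Let $\delta\ge 3$ and $n\ge 8\delta-7$ be integers. Then $$\rho_{\mathcal D}\big(K_2\vee(K_{n-\delta-1}\cup K_{\delta-1})\big)\ >\ \rho_{\mathcal D}\big(K_\delta\vee(K_{n-2\delta+1}\cup(\delta-1)K_1)\big).$$
   Context: For a connected graph $G$, $\mathcal D(G)$ is its distance matrix (entry $(i,j)$ is the distance between the $i$-th and $j$-th vertices) and $\rho_{\mathcal D}(G)$ its largest eigenvalue. $K_m$ is the complete graph on $m$ vertices, $tK_1$ the edgeless graph on $t$ vertices, $\cup$ disjoint union, and $\vee$ the join. *)

theory Defs
  imports Complex_Main
begin

type_synonym 'a graph = "'a set \<times> ('a \<Rightarrow> 'a \<Rightarrow> bool)"

definition verts :: "'a graph \<Rightarrow> 'a set" where "verts G = fst G"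
definition adj :: "'a graph \<Rightarrow> 'a \<Rightarrow> 'a \<Rightarrow> bool" where "adj G = snd G"

definition complete_graph :: "nat \<Rightarrow> nat graph" where
  "complete_graph m = ({..<m}, \<lambda>i j. i \<noteq> j)"

definition edgeless_graph :: "nat \<Rightarrow> nat graph" where
  "edgeless_graph m = ({..<m}, \<lambda>i j. False)"

definition graph_union :: "'a graph \<Rightarrow> 'b graph \<Rightarrow> ('a + 'b) graph" where
  "graph_union G H = (Inl ` verts G \<union> Inr ` verts H,
     \<lambda>x y. case (x, y) of (Inl a, Inl b) \<Rightarrow> adj G a b
                       | (Inr a, Inr b) \<Rightarrow> adj H a b
                       | _ \<Rightarrow> False)"

definition graph_join :: "'a graph \<Rightarrow> 'b graph \<Rightarrow> ('a + 'b) graph" where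
  "graph_join G H = (Inl ` verts G \<union> Inr ` verts H,
     \<lambda>x y. case (x, y) of (Inl a, Inl b) \<Rightarrow> adj G a b
                       | (Inr a, Inr b) \<Rightarrow> adj H a b
                       | _ \<Rightarrow> True)"

definition has_walk :: "'a graph \<Rightarrow> 'a \<Rightarrow> 'a \<Rightarrow> nat \<Rightarrow> bool" where
  "has_walk G u v k = (\<exists>xs. length xs = Suc k \<and> hd xs = u \<and> last xs = v \<and>
       set xs \<subseteq> verts G \<and> (\<forall>i<k. adj G (xs ! i) (xs ! Suc i)))"

definition graph_dist :: "'a graph \<Rightarrow> 'a \<Rightarrow> 'a \<Rightarrow> nat" where
  "graph_dist G u v = (LEAST k. has_walk G u v k)"

definition dist_eigenvalue :: "'a graph \<Rightarrow> real \<Rightarrow> bool" where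
  "dist_eigenvalue G \<mu> = (\<exists>x :: 'a \<Rightarrow> real. (\<exists>v\<in>verts G. x v \<noteq> 0) \<and>
      (\<forall>u\<in>verts G. (\<Sum>v\<in>verts G. real (graph_dist G u v) * x v) = \<mu> * x u))"

definition dist_spectral_radius :: "'a graph \<Rightarrow> real" where
  "dist_spectral_radius G = Max {\<mu>. dist_eigenvalue G \<mu>}"

end

theory Submission
  imports Defs "HOL-Computational_Algebra.Polynomial"
begin

text \<open>Both graphs have the form K_m \<or> (H \<union> K) with H and K complete or edgeless, so distinct
  vertices are at distance 1 or 2 according to adjacency, and this distance only depends on
  which of the three parts K_m, H, K they lie in. An eigenvector of the distance matrix is
  then either constant on the parts, giving an eigenvalue of the 3 \<times> 3 quotient matrix, or
  its eigenvalue is -1 or -2. Hence the distance spectral radius of the second graph is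
  negative or a root of a cubic p2, while every positive root of a cubic p1 is an eigenvalue of
  the first graph. A polynomial identity shows that p1 is negative at the largest positive root
  of p2 once n \<ge> 8\<delta> - 7, and as p1 grows to infinity it has a larger root.\<close>

section \<open>Matrices with part-dependent entries\<close>

locale distance_partition =
  fixes V :: "'a set" and I :: "'i set" and P :: "'i \<Rightarrow> 'a set"
    and D :: "'a \<Rightarrow> 'a \<Rightarrow> real" and e :: "'i \<Rightarrow> 'i \<Rightarrow> real"
  assumes finite_V: "finite V"
    and V_eq: "V = (\<Union>i\<in>I. P i)"
    and parts_disjoint: "\<And>i j. i \<in> I \<Longrightarrow> j \<in> I \<Longrightarrow> i \<noteq> j \<Longrightarrow> P i \<inter> P j = {}"
    and parts_nonempty: "\<And>i. i \<in> I \<Longrightarrow> P i \<noteq> {}"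
    and D_diag: "\<And>u. u \<in> V \<Longrightarrow> D u u = 0"
    and D_off_diag: "\<And>i j u v. i \<in> I \<Longrightarrow> j \<in> I \<Longrightarrow> u \<in> P i \<Longrightarrow> v \<in> P j \<Longrightarrow> u \<noteq> v \<Longrightarrow>
      D u v = e i j"
begin

definition eigenvalue :: "real \<Rightarrow> bool" where
  "eigenvalue \<mu> \<longleftrightarrow> (\<exists>x. (\<exists>v\<in>V. x v \<noteq> 0) \<and> (\<forall>u\<in>V. (\<Sum>v\<in>V. D u v * x v) = \<mu> * x u))"

definition quotient_matrix :: "'i \<Rightarrow> 'i \<Rightarrow> real" where
  "quotient_matrix i j = real (card (P j)) * e i j - (if i = j then e i i else 0)"

definition quotient_eigenvalue :: "real \<Rightarrow> bool" where
  "quotient_eigenvalue \<mu> \<longleftrightarrow>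
     (\<exists>y. (\<exists>i\<in>I. y i \<noteq> 0) \<and> (\<forall>i\<in>I. (\<Sum>j\<in>I. quotient_matrix i j * y j) = \<mu> * y i))"

lemma part_subset: "i \<in> I \<Longrightarrow> P i \<subseteq> V"
  using V_eq by auto

lemma finite_part: "i \<in> I \<Longrightarrow> finite (P i)"
  using finite_V part_subset by (rule finite_subset[rotated])

lemma finite_I: "finite I"
proof -
  have "inj_on P I"
    using parts_disjoint parts_nonempty by (fastforce intro: inj_onI)
  moreover have "finite (P ` I)"
    using finite_V part_subset by (auto intro: finite_subset[of _ "Pow V"])
  ultimately show ?thesis by (metis finite_imageD)
qed

lemma part_uniqueI: "i \<in> I \<Longrightarrow> j \<in> I \<Longrightarrow> v \<in> P i \<Longrightarrow> v \<in> P j \<Longrightarrow> i = j"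
  using parts_disjoint by blast

lemma sum_over_parts: "(\<Sum>v\<in>V. f v) = (\<Sum>j\<in>I. \<Sum>v\<in>P j. f v)"
  unfolding V_eq using finite_I finite_part parts_disjoint by (intro sum.UNION_disjoint) auto

lemma sum_D_over_part:
  assumes "i \<in> I" "j \<in> I" "u \<in> P i"
  shows "(\<Sum>v\<in>P j. D u v) = quotient_matrix i j"
proof (cases "j = i")
  case True
  have "D u u = 0" using assms part_subset D_diag by blast
  then have "(\<Sum>v\<in>P j. D u v) = (\<Sum>v\<in>P j - {u}. D u v)"
    using True assms finite_part by (simp add: sum.remove)
  also have "\<dots> = (\<Sum>v\<in>P j - {u}. e i j)"
    using True assms D_off_diag[of i j u] by (intro sum.cong) auto
  also have "\<dots> = real (card (P j) - 1) * e i j"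
    using True assms finite_part by simp
  also have "\<dots> = quotient_matrix i j"
    using True assms finite_part[of j] card_gt_0_iff[of "P j"]
    by (auto simp: quotient_matrix_def of_nat_diff algebra_simps)
  finally show ?thesis .
next
  case False
  then have "(\<Sum>v\<in>P j. D u v) = (\<Sum>v\<in>P j. e i j)"
    using assms D_off_diag[of i j u] part_uniqueI by (intro sum.cong) blast+
  then show ?thesis using False by (simp add: quotient_matrix_def)
qed

lemma row_sum_of_part_constant:
  assumes "i \<in> I" "u \<in> P i" and x_y: "\<And>j v. j \<in> I \<Longrightarrow> v \<in> P j \<Longrightarrow> x v = y j"
  shows "(\<Sum>v\<in>V. D u v * x v) = (\<Sum>j\<in>I. quotient_matrix i j * y j)"
proof -
  have "(\<Sum>v\<in>V. D u v * x v) = (\<Sum>j\<in>I. (\<Sum>v\<in>P j. D u v) * y j)"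
    unfolding sum_over_parts sum_distrib_right using x_y by (intro sum.cong) auto
  then show ?thesis using assms by (simp add: sum_D_over_part)
qed

text \<open>Rows u and u' of D differ only in the columns u and u'.\<close>
lemma eigenvector_constant_on_part:
  assumes eigen: "\<forall>u\<in>V. (\<Sum>v\<in>V. D u v * x v) = \<mu> * x u"
    and "i \<in> I" "u \<in> P i" "u' \<in> P i" "\<mu> \<noteq> - e i i"
  shows "x u = x u'"
proof (rule ccontr)
  assume ne: "x u \<noteq> x u'"
  then have "u \<noteq> u'" by auto
  have "u \<in> V" "u' \<in> V" using assms part_subset by auto
  have "D u v = D u' v" if v: "v \<in> V - {u, u'}" for v
  proof -
    obtain j where "j \<in> I" "v \<in> P j" using v V_eq by auto
    then show ?thesis using assms v D_off_diag[of i j] by auto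
  qed
  then have "(\<Sum>v\<in>V. (D u v - D u' v) * x v) = (\<Sum>v\<in>{u, u'}. (D u v - D u' v) * x v)"
    using finite_V assms part_subset by (intro sum.mono_neutral_right) auto
  also have "\<dots> = - e i i * (x u - x u')"
    using \<open>u \<noteq> u'\<close> \<open>u \<in> V\<close> \<open>u' \<in> V\<close> assms D_diag
      D_off_diag[of i i u u'] D_off_diag[of i i u' u]
    by (auto simp: algebra_simps)
  finally have "\<mu> * (x u - x u') = - e i i * (x u - x u')"
    using eigen \<open>u \<in> V\<close> \<open>u' \<in> V\<close> by (simp add: sum_subtractf left_diff_distrib right_diff_distrib)
  then have "(\<mu> + e i i) * (x u - x u') = 0" by (simp add: algebra_simps)
  then show False using ne assms(5) by (simp add: add_eq_0_iff)
qed

lemma eigenvalue_neg_diag: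
  assumes "i \<in> I" "2 \<le> card (P i)"
  shows "eigenvalue (- e i i)"
proof -
  obtain u u' where uu': "u \<in> P i" "u' \<in> P i" "u \<noteq> u'"
    using assms finite_part card_le_Suc0_iff_eq[of "P i"] by force
  then have "u \<in> V" "u' \<in> V" using assms part_subset by auto
  define x where "x v = (if v = u then 1 else if v = u' then -1 else 0 :: real)" for v
  have "(\<Sum>v\<in>V. D w v * x v) = - e i i * x w" if "w \<in> V" for w
  proof -
    have "(\<Sum>v\<in>V. D w v * x v) = (\<Sum>v\<in>{u, u'}. D w v * x v)"
      using finite_V \<open>u \<in> V\<close> \<open>u' \<in> V\<close> by (intro sum.mono_neutral_right) (auto simp: x_def)
    also have "\<dots> = D w u - D w u'"
      using uu' by (simp add: x_def)
    also have "\<dots> = - e i i * x w"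
    proof (cases "w = u \<or> w = u'")
      case True
      then show ?thesis
        using uu' assms \<open>u \<in> V\<close> \<open>u' \<in> V\<close> D_diag D_off_diag[of i i] by (auto simp: x_def)
    next
      case False
      obtain j where "j \<in> I" "w \<in> P j" using \<open>w \<in> V\<close> V_eq by auto
      then show ?thesis using False uu' assms D_off_diag[of j i w] by (simp add: x_def)
    qed
    finally show ?thesis .
  qed
  moreover have "x u \<noteq> 0" by (simp add: x_def)
  ultimately show ?thesis unfolding eigenvalue_def using \<open>u \<in> V\<close> by blast
qed

lemma quotient_eigenvalue_imp_eigenvalue:
  assumes "quotient_eigenvalue \<mu>"
  shows "eigenvalue \<mu>"
proof -
  obtain y where y: "\<exists>i\<in>I. y i \<noteq> 0" "\<forall>i\<in>I. (\<Sum>j\<in>I. quotient_matrix i j * y j) = \<mu> * y i"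
    using assms unfolding quotient_eigenvalue_def by blast
  define x where "x v = y (THE i. i \<in> I \<and> v \<in> P i)" for v
  have x_y: "x v = y j" if "j \<in> I" "v \<in> P j" for j v
    unfolding x_def using that part_uniqueI by (metis (mono_tags, lifting) the_equality)
  obtain i v where "i \<in> I" "y i \<noteq> 0" "v \<in> P i"
    using y(1) parts_nonempty by blast
  then have "\<exists>v\<in>V. x v \<noteq> 0" using x_y part_subset by (metis subsetD)
  moreover have "(\<Sum>v\<in>V. D u v * x v) = \<mu> * x u" if "u \<in> V" for u
  proof -
    obtain i where "i \<in> I" "u \<in> P i" using \<open>u \<in> V\<close> V_eq by auto
    then show ?thesis using row_sum_of_part_constant[of i u x y] y(2) x_y by auto
  qed
  ultimately show ?thesis unfolding eigenvalue_def by blast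
qed

lemma eigenvalue_imp_quotient_eigenvalue:
  assumes "eigenvalue \<mu>" "\<forall>i\<in>I. 2 \<le> card (P i) \<longrightarrow> \<mu> \<noteq> - e i i"
  shows "quotient_eigenvalue \<mu>"
proof -
  obtain x where x: "\<exists>v\<in>V. x v \<noteq> 0" "\<forall>u\<in>V. (\<Sum>v\<in>V. D u v * x v) = \<mu> * x u"
    using assms(1) unfolding eigenvalue_def by blast
  have x_const: "x u = x u'" if "i \<in> I" "u \<in> P i" "u' \<in> P i" for i u u'
  proof (cases "2 \<le> card (P i)")
    case True
    then show ?thesis using eigenvector_constant_on_part[OF x(2)] that assms(2) by blast
  next
    case False
    then have "u = u'" using that finite_part card_le_Suc0_iff_eq[of "P i"] by auto
    then show ?thesis by simp
  qed
  define y where "y i = x (SOME v. v \<in> P i)" for i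
  have x_y: "x v = y j" if "j \<in> I" "v \<in> P j" for j v
    unfolding y_def using that x_const parts_nonempty by (metis some_in_eq)
  have "\<exists>i\<in>I. y i \<noteq> 0" using x(1) V_eq x_y by auto
  moreover have "(\<Sum>j\<in>I. quotient_matrix i j * y j) = \<mu> * y i" if i: "i \<in> I" for i
  proof -
    obtain u where u: "u \<in> P i" using i parts_nonempty by blast
    then have "u \<in> V" using i part_subset by blast
    have "(\<Sum>j\<in>I. quotient_matrix i j * y j) = (\<Sum>v\<in>V. D u v * x v)"
      using row_sum_of_part_constant[of i u x y] i u x_y by simp
    also have "\<dots> = \<mu> * y i" using x(2) \<open>u \<in> V\<close> x_y[OF i u] by simp
    finally show ?thesis .
  qed
  ultimately show ?thesis unfolding quotient_eigenvalue_def by blast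
qed

theorem eigenvalue_iff:
  "eigenvalue \<mu> \<longleftrightarrow> quotient_eigenvalue \<mu> \<or> (\<exists>i\<in>I. 2 \<le> card (P i) \<and> \<mu> = - e i i)"
  using eigenvalue_imp_quotient_eigenvalue quotient_eigenvalue_imp_eigenvalue eigenvalue_neg_diag
  by blast

end

section \<open>Distances in joins with a complete graph\<close>

lemma has_walk_0_iff: "has_walk G u v 0 \<longleftrightarrow> u = v \<and> u \<in> verts G"
proof
  assume "has_walk G u v 0"
  then obtain x where "[x] = [u]" "[x] = [v]" "x \<in> verts G"
    unfolding has_walk_def by (auto simp: length_Suc_conv)
  then show "u = v \<and> u \<in> verts G" by simp
qed (auto simp: has_walk_def intro!: exI[of _ "[u]"])

lemma has_walk_1_imp_adj: "has_walk G u v 1 \<Longrightarrow> adj G u v"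
  by (auto simp: has_walk_def length_Suc_conv)

lemma graph_dist_self: "u \<in> verts G \<Longrightarrow> graph_dist G u u = 0"
  by (simp add: graph_dist_def has_walk_0_iff)

lemma graph_dist_eqI:
  assumes "has_walk G u v k" "\<And>j. j < k \<Longrightarrow> \<not> has_walk G u v j"
  shows "graph_dist G u v = k"
  unfolding graph_dist_def using assms by (intro Least_equality) (auto simp: not_less[symmetric])

lemma graph_dist_eq_1:
  assumes "u \<noteq> v" "u \<in> verts G" "v \<in> verts G" "adj G u v"
  shows "graph_dist G u v = 1"
proof (rule graph_dist_eqI)
  show "has_walk G u v 1"
    unfolding has_walk_def using assms by (intro exI[of _ "[u, v]"]) auto
qed (use assms in \<open>simp add: has_walk_0_iff\<close>)

lemma graph_dist_eq_2:
  assumes "u \<noteq> v" "u \<in> verts G" "v \<in> verts G" "\<not> adj G u v"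
    and "w \<in> verts G" "adj G u w" "adj G w v"
  shows "graph_dist G u v = 2"
proof (rule graph_dist_eqI)
  show "has_walk G u v 2"
    unfolding has_walk_def using assms
    by (intro exI[of _ "[u, w, v]"]) (auto simp: less_Suc_eq numeral_2_eq_2)
qed (use assms has_walk_0_iff has_walk_1_imp_adj in \<open>metis less_2_cases One_nat_def\<close>)

lemma verts_graph_join: "verts (graph_join G H) = Inl ` verts G \<union> Inr ` verts H"
  by (simp add: graph_join_def verts_def)

lemma verts_graph_union: "verts (graph_union G H) = Inl ` verts G \<union> Inr ` verts H"
  by (simp add: graph_union_def verts_def)

lemma adj_graph_join [simp]:
  "adj (graph_join G H) (Inl a) (Inl b) = adj G a b"
  "adj (graph_join G H) (Inr c) (Inr d) = adj H c d"
  "adj (graph_join G H) (Inl a) (Inr c)"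
  "adj (graph_join G H) (Inr c) (Inl a)"
  by (simp_all add: graph_join_def adj_def)

lemma adj_graph_union [simp]:
  "adj (graph_union G H) (Inl a) (Inl b) = adj G a b"
  "adj (graph_union G H) (Inr c) (Inr d) = adj H c d"
  "\<not> adj (graph_union G H) (Inl a) (Inr c)"
  "\<not> adj (graph_union G H) (Inr c) (Inl a)"
  by (simp_all add: graph_union_def adj_def)

lemma verts_complete_graph: "verts (complete_graph m) = {..<m}"
  and adj_complete_graph: "adj (complete_graph m) i j \<longleftrightarrow> i \<noteq> j"
  and verts_edgeless_graph: "verts (edgeless_graph m) = {..<m}"
  and adj_edgeless_graph: "\<not> adj (edgeless_graph m) i j"
  by (simp_all add: complete_graph_def edgeless_graph_def verts_def adj_def)

definition adj_dist :: "bool \<Rightarrow> real" where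
  "adj_dist c = (if c then 1 else 2)"

lemma graph_dist_join_complete_graph:
  fixes m :: nat and H :: "'b graph"
  defines "G \<equiv> graph_join (complete_graph m) H"
  assumes "0 < m" "u \<in> verts G" "v \<in> verts G" "u \<noteq> v"
  shows "real (graph_dist G u v) = adj_dist (adj G u v)"
proof (cases "adj G u v")
  case True
  then show ?thesis using assms graph_dist_eq_1 by (simp add: adj_dist_def)
next
  case False
  then obtain c d where "u = Inr c" "v = Inr d"
    using assms by (cases u; cases v) (auto simp: adj_complete_graph)
  then have "graph_dist G u v = 2"
    using assms False
    by (intro graph_dist_eq_2[where w = "Inl 0"]) (auto simp: verts_graph_join verts_complete_graph)
  then show ?thesis using False by (simp add: adj_dist_def)
qed

definition join_union_parts :: "nat \<Rightarrow> 'a graph \<Rightarrow> 'b graph \<Rightarrow> nat \<Rightarrow> (nat + ('a + 'b)) set" where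
  "join_union_parts m H K i =
     (if i = 0 then Inl ` {..<m} else if i = 1 then Inr ` Inl ` verts H else Inr ` Inr ` verts K)"

definition join_union_part_dist :: "bool \<Rightarrow> bool \<Rightarrow> nat \<Rightarrow> nat \<Rightarrow> real" where
  "join_union_part_dist cH cK i j =
     adj_dist (i = 0 \<or> j = 0 \<or> (i = 1 \<and> j = 1 \<and> cH) \<or> (i = 2 \<and> j = 2 \<and> cK))"

lemma distance_partition_join_union:
  fixes m :: nat and H :: "'a graph" and K :: "'b graph"
  defines "G \<equiv> graph_join (complete_graph m) (graph_union H K)"
  assumes "0 < m" "finite (verts H)" "finite (verts K)" "verts H \<noteq> {}" "verts K \<noteq> {}"
    and "\<And>a b. a \<noteq> b \<Longrightarrow> adj H a b = cH" "\<And>a b. a \<noteq> b \<Longrightarrow> adj K a b = cK"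
  shows "distance_partition (verts G) {0, 1, 2} (join_union_parts m H K)
           (\<lambda>u v. real (graph_dist G u v)) (join_union_part_dist cH cK)"
proof
  have verts_G: "verts G = join_union_parts m H K 0 \<union> join_union_parts m H K 1 \<union> join_union_parts m H K 2"
    by (auto simp: G_def join_union_parts_def verts_graph_join verts_graph_union verts_complete_graph)
  then show "verts G = (\<Union>i\<in>{0, 1, 2}. join_union_parts m H K i)"
    by auto
  show "finite (verts G)"
    using assms by (simp add: G_def verts_graph_join verts_graph_union verts_complete_graph)
  show "join_union_parts m H K i \<inter> join_union_parts m H K j = {}"
    if "i \<in> {0, 1, 2}" "j \<in> {0, 1, 2}" "i \<noteq> j" for i j
    using that by (auto simp: join_union_parts_def)
  show "join_union_parts m H K i \<noteq> {}" if "i \<in> {0, 1, 2}" for i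
    using that assms by (auto simp: join_union_parts_def)
  show "real (graph_dist G u u) = 0" if "u \<in> verts G" for u
    using that by (simp add: graph_dist_self)
  show "real (graph_dist G u v) = join_union_part_dist cH cK i j"
    if "i \<in> {0, 1, 2}" "j \<in> {0, 1, 2}" "u \<in> join_union_parts m H K i"
      "v \<in> join_union_parts m H K j" "u \<noteq> v" for i j u v
  proof -
    have "u \<in> verts G" "v \<in> verts G" using that verts_G by auto
    then have "real (graph_dist G u v) = adj_dist (adj G u v)"
      unfolding G_def using assms(2) that(5) by (intro graph_dist_join_complete_graph) simp_all
    moreover have "adj G u v \<longleftrightarrow> i = 0 \<or> j = 0 \<or> (i = 1 \<and> j = 1 \<and> cH) \<or> (i = 2 \<and> j = 2 \<and> cK)"
      using that assms(7,8) by (elim insertE emptyE) (auto simp: G_def join_union_parts_def adj_complete_graph)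
    ultimately show ?thesis by (simp add: join_union_part_dist_def)
  qed
qed

theorem dist_eigenvalue_join_union_iff:
  fixes m :: nat and H :: "'a graph" and K :: "'b graph" and cH cK :: bool
  defines "G \<equiv> graph_join (complete_graph m) (graph_union H K)"
    and "a \<equiv> real (card (verts H))" and "b \<equiv> real (card (verts K))"
    and "h \<equiv> adj_dist cH" and "k \<equiv> adj_dist cK"
  assumes "0 < m" "finite (verts H)" "finite (verts K)" "verts H \<noteq> {}" "verts K \<noteq> {}"
    and "\<And>a b. a \<noteq> b \<Longrightarrow> adj H a b = cH" "\<And>a b. a \<noteq> b \<Longrightarrow> adj K a b = cK"
  shows "dist_eigenvalue G \<mu> \<longleftrightarrow> (\<exists>y0 y1 y2. (y0 \<noteq> 0 \<or> y1 \<noteq> 0 \<or> y2 \<noteq> 0) \<and>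
       (real m - 1) * y0 + a * y1 + b * y2 = \<mu> * y0 \<and>
       real m * y0 + (a - 1) * h * y1 + 2 * b * y2 = \<mu> * y1 \<and>
       real m * y0 + 2 * a * y1 + (b - 1) * k * y2 = \<mu> * y2) \<or>
    (2 \<le> m \<and> \<mu> = -1) \<or> (2 \<le> card (verts H) \<and> \<mu> = - h) \<or> (2 \<le> card (verts K) \<and> \<mu> = - k)"
    (is "_ \<longleftrightarrow> (\<exists>y0 y1 y2. ?nonzero y0 y1 y2 \<and> ?eqs y0 y1 y2) \<or> ?diag")
proof -
  interpret distance_partition "verts G" "{0, 1, 2}" "join_union_parts m H K"
      "\<lambda>u v. real (graph_dist G u v)" "join_union_part_dist cH cK"
    unfolding G_def using assms(6-) by (rule distance_partition_join_union)
  have quotient_eqs: "(\<forall>i\<in>{0, 1, 2}. (\<Sum>j\<in>{0, 1, 2}. quotient_matrix i j * y j) = \<mu> * y i)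
      \<longleftrightarrow> ?eqs (y 0) (y 1) (y 2)" for y
    by (simp add: quotient_matrix_def join_union_parts_def card_image join_union_part_dist_def)
      (simp add: a_def b_def h_def k_def adj_dist_def algebra_simps)
  have quotient: "quotient_eigenvalue \<mu> \<longleftrightarrow> (\<exists>y0 y1 y2. ?nonzero y0 y1 y2 \<and> ?eqs y0 y1 y2)"
  proof
    assume "quotient_eigenvalue \<mu>"
    then obtain y where "\<exists>i\<in>{0, 1, 2}. y i \<noteq> 0"
      "\<forall>i\<in>{0, 1, 2}. (\<Sum>j\<in>{0, 1, 2}. quotient_matrix i j * y j) = \<mu> * y i"
      unfolding quotient_eigenvalue_def by blast
    then show "\<exists>y0 y1 y2. ?nonzero y0 y1 y2 \<and> ?eqs y0 y1 y2"
      unfolding quotient_eqs by auto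
  next
    assume "\<exists>y0 y1 y2. ?nonzero y0 y1 y2 \<and> ?eqs y0 y1 y2"
    then obtain y0 y1 y2 where "?nonzero y0 y1 y2" "?eqs y0 y1 y2" by blast
    moreover define y where "y i = (if i = 0 then y0 else if i = 1 then y1 else y2)" for i :: nat
    ultimately show "quotient_eigenvalue \<mu>"
      unfolding quotient_eigenvalue_def quotient_eqs by (intro exI[of _ y]) (auto simp: y_def)
  qed
  have diag: "(\<exists>i\<in>{0, 1, 2}. 2 \<le> card (join_union_parts m H K i) \<and>
      \<mu> = - join_union_part_dist cH cK i i) \<longleftrightarrow> ?diag"
    by (auto simp: join_union_parts_def card_image join_union_part_dist_def h_def k_def adj_dist_def)
  have "dist_eigenvalue G \<mu> \<longleftrightarrow> eigenvalue \<mu>"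
    by (simp add: dist_eigenvalue_def eigenvalue_def)
  then show ?thesis unfolding eigenvalue_iff quotient diag .
qed

section \<open>The two graphs\<close>

lemma det3_eq_0_if_nontrivial_solution:
  fixes a11 a12 a13 a21 a22 a23 a31 a32 a33 y1 y2 y3 :: real
  assumes "a11 * y1 + a12 * y2 + a13 * y3 = 0" "a21 * y1 + a22 * y2 + a23 * y3 = 0"
    "a31 * y1 + a32 * y2 + a33 * y3 = 0" "y1 \<noteq> 0 \<or> y2 \<noteq> 0 \<or> y3 \<noteq> 0"
  shows "a11 * (a22 * a33 - a23 * a32) - a12 * (a21 * a33 - a23 * a31)
    + a13 * (a21 * a32 - a22 * a31) = 0"
proof -
  let ?det = "a11 * (a22 * a33 - a23 * a32) - a12 * (a21 * a33 - a23 * a31)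
    + a13 * (a21 * a32 - a22 * a31)"
  have "?det * y1 = 0" "?det * y2 = 0" "?det * y3 = 0"
    using assms(1-3) by algebra+
  then show ?thesis using assms(4) by auto
qed

definition two_clique_join :: "nat \<Rightarrow> nat \<Rightarrow> (nat + (nat + nat)) graph" where
  "two_clique_join n \<delta> =
     graph_join (complete_graph 2) (graph_union (complete_graph (n - \<delta> - 1)) (complete_graph (\<delta> - 1)))"

definition clique_coclique_join :: "nat \<Rightarrow> nat \<Rightarrow> (nat + (nat + nat)) graph" where
  "clique_coclique_join n \<delta> =
     graph_join (complete_graph \<delta>) (graph_union (complete_graph (n - 2 * \<delta> + 1)) (edgeless_graph (\<delta> - 1)))"

text \<open>Up to sign, the characteristic polynomials of the quotient matrices of the two graphs
  below, in terms of N = n and d = \<delta>.\<close>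
definition two_clique_join_poly :: "real \<Rightarrow> real \<Rightarrow> real \<Rightarrow> real" where
  "two_clique_join_poly N d \<mu> = \<mu>^3 + (3 - N) * \<mu>^2 + (N - 3 * N * d + 3 * d^2) * \<mu> + (d^2 - N * d)"

definition clique_coclique_join_poly :: "real \<Rightarrow> real \<Rightarrow> real \<Rightarrow> real" where
  "clique_coclique_join_poly N d \<mu> = \<mu>^3 + (5 - N - d) * \<mu>^2 + (5 * d^2 - 2 * N * d - 8 * d - N + 8) * \<mu>
     + (N * d^2 - 2 * d^3 + 8 * d^2 - 3 * N * d - 8 * d + 4)"

lemma dist_eigenvalue_two_clique_join_iff:
  assumes "2 \<le> \<delta>" "\<delta> + 2 \<le> n"
  defines "N \<equiv> real n" and "d \<equiv> real \<delta>"
  shows "dist_eigenvalue (two_clique_join n \<delta>) \<mu> \<longleftrightarrow>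
    (\<exists>y0 y1 y2. (y0 \<noteq> 0 \<or> y1 \<noteq> 0 \<or> y2 \<noteq> 0) \<and>
       y0 + (N - d - 1) * y1 + (d - 1) * y2 = \<mu> * y0 \<and>
       2 * y0 + (N - d - 2) * y1 + 2 * (d - 1) * y2 = \<mu> * y1 \<and>
       2 * y0 + 2 * (N - d - 1) * y1 + (d - 2) * y2 = \<mu> * y2) \<or> \<mu> = -1"
  unfolding two_clique_join_def
  by (subst dist_eigenvalue_join_union_iff[where cH = True and cK = True])
    (use assms in \<open>auto simp: verts_complete_graph adj_complete_graph adj_dist_def of_nat_diff
      lessThan_empty_iff algebra_simps\<close>)

lemma dist_eigenvalue_clique_coclique_join_iff:
  assumes "2 \<le> \<delta>" "2 * \<delta> \<le> n"
  defines "N \<equiv> real n" and "d \<equiv> real \<delta>"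
  shows "dist_eigenvalue (clique_coclique_join n \<delta>) \<mu> \<longleftrightarrow>
    (\<exists>y0 y1 y2. (y0 \<noteq> 0 \<or> y1 \<noteq> 0 \<or> y2 \<noteq> 0) \<and>
       (d - 1) * y0 + (N - 2 * d + 1) * y1 + (d - 1) * y2 = \<mu> * y0 \<and>
       d * y0 + (N - 2 * d) * y1 + 2 * (d - 1) * y2 = \<mu> * y1 \<and>
       d * y0 + 2 * (N - 2 * d + 1) * y1 + 2 * (d - 2) * y2 = \<mu> * y2) \<or>
    \<mu> = -1 \<or> (3 \<le> \<delta> \<and> \<mu> = -2)"
  unfolding clique_coclique_join_def
  by (subst dist_eigenvalue_join_union_iff[where cH = True and cK = False])
    (use assms in \<open>auto simp: verts_complete_graph verts_edgeless_graph adj_complete_graph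
      adj_edgeless_graph adj_dist_def of_nat_diff lessThan_empty_iff algebra_simps\<close>)

lemma two_clique_join_eigenvalue_cases:
  assumes "2 \<le> \<delta>" "\<delta> + 2 \<le> n" "dist_eigenvalue (two_clique_join n \<delta>) \<mu>"
  shows "\<mu> = -1 \<or> two_clique_join_poly n \<delta> \<mu> = 0"
proof -
  define N d where "N = real n" and "d = real \<delta>"
  from assms consider (quotient) y0 y1 y2 where "y0 \<noteq> 0 \<or> y1 \<noteq> 0 \<or> y2 \<noteq> 0"
      "y0 + (N - d - 1) * y1 + (d - 1) * y2 = \<mu> * y0"
      "2 * y0 + (N - d - 2) * y1 + 2 * (d - 1) * y2 = \<mu> * y1"
      "2 * y0 + 2 * (N - d - 1) * y1 + (d - 2) * y2 = \<mu> * y2"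
    | "\<mu> = -1"
    unfolding N_def d_def by (auto simp: dist_eigenvalue_two_clique_join_iff)
  then show ?thesis
  proof cases
    case quotient
    then have "(1 - \<mu>) * ((N - d - 2 - \<mu>) * (d - 2 - \<mu>) - 2 * (d - 1) * (2 * (N - d - 1)))
        - (N - d - 1) * (2 * (d - 2 - \<mu>) - 2 * (d - 1) * 2)
        + (d - 1) * (2 * (2 * (N - d - 1)) - (N - d - 2 - \<mu>) * 2) = 0"
      by (intro det3_eq_0_if_nontrivial_solution) (simp_all add: algebra_simps)
    then show ?thesis unfolding two_clique_join_poly_def N_def d_def by algebra
  qed simp
qed

lemma two_clique_join_eigenvalueI:
  assumes "2 \<le> \<delta>" "\<delta> + 2 \<le> n" "0 < \<mu>" "two_clique_join_poly n \<delta> \<mu> = 0"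
  shows "dist_eigenvalue (two_clique_join n \<delta>) \<mu>"
proof -
  define N d where "N = real n" and "d = real \<delta>"
  txt \<open>The cross product of the last two rows of the quotient matrix minus \<mu>; it is orthogonal
    to the first row as well because the determinant vanishes.\<close>
  define y0 y1 y2 where "y0 = (\<mu> - N + d + 2) * (\<mu> - d + 2) - 4 * (N - d - 1) * (d - 1)"
    and "y1 = 2 * (\<mu> + d)" and "y2 = 2 * (\<mu> + N - d)"
  have "y2 \<noteq> 0" using assms by (simp add: y2_def N_def d_def)
  moreover have "y0 + (N - d - 1) * y1 + (d - 1) * y2 = \<mu> * y0"
    using assms(4) unfolding y0_def y1_def y2_def N_def d_def two_clique_join_poly_def by algebra
  moreover have "2 * y0 + (N - d - 2) * y1 + 2 * (d - 1) * y2 = \<mu> * y1"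
    unfolding y0_def y1_def y2_def by algebra
  moreover have "2 * y0 + 2 * (N - d - 1) * y1 + (d - 2) * y2 = \<mu> * y2"
    unfolding y0_def y1_def y2_def by algebra
  ultimately show ?thesis
    unfolding dist_eigenvalue_two_clique_join_iff[OF assms(1,2)] N_def d_def by blast
qed

lemma clique_coclique_join_eigenvalue_cases:
  assumes "2 \<le> \<delta>" "2 * \<delta> \<le> n" "dist_eigenvalue (clique_coclique_join n \<delta>) \<mu>"
  shows "\<mu> = -1 \<or> \<mu> = -2 \<or> clique_coclique_join_poly n \<delta> \<mu> = 0"
proof -
  define N d where "N = real n" and "d = real \<delta>"
  from assms consider (quotient) y0 y1 y2 where "y0 \<noteq> 0 \<or> y1 \<noteq> 0 \<or> y2 \<noteq> 0"
      "(d - 1) * y0 + (N - 2 * d + 1) * y1 + (d - 1) * y2 = \<mu> * y0"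
      "d * y0 + (N - 2 * d) * y1 + 2 * (d - 1) * y2 = \<mu> * y1"
      "d * y0 + 2 * (N - 2 * d + 1) * y1 + 2 * (d - 2) * y2 = \<mu> * y2"
    | "\<mu> = -1" | "\<mu> = -2"
    unfolding N_def d_def by (auto simp: dist_eigenvalue_clique_coclique_join_iff)
  then show ?thesis
  proof cases
    case quotient
    then have "(d - 1 - \<mu>) * ((N - 2 * d - \<mu>) * (2 * (d - 2) - \<mu>) - 2 * (d - 1) * (2 * (N - 2 * d + 1)))
        - (N - 2 * d + 1) * (d * (2 * (d - 2) - \<mu>) - 2 * (d - 1) * d)
        + (d - 1) * (d * (2 * (N - 2 * d + 1)) - (N - 2 * d - \<mu>) * d) = 0"
      by (intro det3_eq_0_if_nontrivial_solution) (simp_all add: algebra_simps)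
    then show ?thesis unfolding clique_coclique_join_poly_def N_def d_def by algebra
  qed simp_all
qed

lemma finite_monic_cubic_roots: "finite {x :: real. x^3 + a * x^2 + b * x + c = 0}"
proof -
  have "{x. x^3 + a * x^2 + b * x + c = 0} = {x. poly [:c, b, a, 1:] x = 0}"
    by (simp add: algebra_simps power2_eq_square power3_eq_cube)
  then show ?thesis using poly_roots_finite[of "[:c, b, a, 1:]"] by simp
qed

lemma two_clique_join_le_dist_spectral_radius:
  assumes "2 \<le> \<delta>" "\<delta> + 2 \<le> n" "0 < \<mu>" "two_clique_join_poly n \<delta> \<mu> = 0"
  shows "\<mu> \<le> dist_spectral_radius (two_clique_join n \<delta>)"
proof -
  have "{\<mu>. dist_eigenvalue (two_clique_join n \<delta>) \<mu>} \<subseteq> {-1} \<union> {\<mu>. two_clique_join_poly n \<delta> \<mu> = 0}"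
    using two_clique_join_eigenvalue_cases assms(1,2) by blast
  then have "finite {\<mu>. dist_eigenvalue (two_clique_join n \<delta>) \<mu>}"
    by (rule finite_subset) (simp add: two_clique_join_poly_def finite_monic_cubic_roots)
  then show ?thesis
    unfolding dist_spectral_radius_def using two_clique_join_eigenvalueI[OF assms] by simp
qed

lemma clique_coclique_join_dist_spectral_radius_cases:
  assumes "2 \<le> \<delta>" "2 * \<delta> \<le> n"
  defines "\<rho> \<equiv> dist_spectral_radius (clique_coclique_join n \<delta>)"
  shows "\<rho> < 0 \<or> clique_coclique_join_poly n \<delta> \<rho> = 0"
proof -
  let ?S = "{\<mu>. dist_eigenvalue (clique_coclique_join n \<delta>) \<mu>}"
  have "?S \<subseteq> {-1, -2} \<union> {\<mu>. clique_coclique_join_poly n \<delta> \<mu> = 0}"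
    using clique_coclique_join_eigenvalue_cases assms(1,2) by blast
  then have "finite ?S"
    by (rule finite_subset) (simp add: clique_coclique_join_poly_def finite_monic_cubic_roots)
  moreover have "-1 \<in> ?S"
    using assms(1,2) by (simp add: dist_eigenvalue_clique_coclique_join_iff)
  ultimately have "\<rho> \<in> ?S"
    unfolding \<rho>_def dist_spectral_radius_def by (intro Max_in) auto
  then show ?thesis
    using clique_coclique_join_eigenvalue_cases assms(1,2) by force
qed

section \<open>Comparing the two cubics\<close>

lemma two_clique_join_poly_pos:
  assumes "1 \<le> d" "2 * d \<le> N" "2 * N \<le> \<mu>"
  shows "0 < two_clique_join_poly N d \<mu>"
proof -
  have "0 < N" "1 \<le> \<mu>" using assms by linarith+
  have "N * d \<le> N * d * \<mu>"
    using \<open>1 \<le> \<mu>\<close> \<open>0 < N\<close> assms(1) by simp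
  have "4 * N * d * \<mu> \<le> \<mu>^2 * N"
  proof -
    have "4 * N * d * \<mu> \<le> (2 * N) * N * \<mu>"
      using assms \<open>0 < N\<close> by (intro mult_right_mono) auto
    also have "\<dots> \<le> \<mu> * N * \<mu>"
      using assms \<open>0 < N\<close> by (intro mult_right_mono) auto
    finally show ?thesis by (simp add: power2_eq_square algebra_simps)
  qed
  also have "\<dots> \<le> \<mu>^2 * (\<mu> - N)"
    using assms \<open>0 < N\<close> by (intro mult_left_mono) auto
  finally have "4 * N * d * \<mu> \<le> \<mu>^2 * (\<mu> - N)" .
  moreover have "0 < 3 * \<mu>^2 + N * \<mu> + 3 * d^2 * \<mu> + d^2"
    using \<open>0 < N\<close> \<open>1 \<le> \<mu>\<close> assms(1) by (simp add: add_pos_nonneg)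
  moreover have "two_clique_join_poly N d \<mu>
      = \<mu>^2 * (\<mu> - N) - 3 * N * d * \<mu> - N * d + (3 * \<mu>^2 + N * \<mu> + 3 * d^2 * \<mu> + d^2)"
    unfolding two_clique_join_poly_def by algebra
  ultimately show ?thesis using \<open>N * d \<le> N * d * \<mu>\<close> by linarith
qed

lemma two_clique_join_poly_root_above:
  assumes "1 \<le> d" "2 * d \<le> N" "two_clique_join_poly N d t < 0"
  obtains \<mu> where "t < \<mu>" "two_clique_join_poly N d \<mu> = 0"
proof -
  define b where "b = max t (2 * N)"
  have "0 \<le> two_clique_join_poly N d b"
    using two_clique_join_poly_pos[OF assms(1,2)] by (simp add: b_def less_imp_le)
  moreover have "continuous_on {t..b} (two_clique_join_poly N d)"
    unfolding two_clique_join_poly_def by (intro continuous_intros)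
  moreover have "t \<le> b" by (simp add: b_def)
  ultimately obtain \<mu> where "t \<le> \<mu>" "two_clique_join_poly N d \<mu> = 0"
    using IVT'[of "two_clique_join_poly N d" t 0 b] assms(3) by auto
  moreover have "\<mu> \<noteq> t" using assms(3) \<open>two_clique_join_poly N d \<mu> = 0\<close> by auto
  ultimately show ?thesis using that by force
qed

text \<open>With the quadratic g below, the second polynomial is (r + d + 1) g + \<alpha> r + \<beta> with
  \<alpha>, \<beta> > 0, and the first one exceeds it by (d - 2) g. So at a positive root r of the second,
  g is negative, and then so is the first.\<close>
lemma two_clique_join_poly_neg_at_root:
  assumes "3 \<le> d" "8 * d - 7 \<le> N" "0 < r" "clique_coclique_join_poly N d r = 0"
  shows "two_clique_join_poly N d r < 0"
proof -
  define g where "g = r^2 - (N + 2 * d - 4) * r - N * d + 2 * d^2 - 3 * d + 2"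
  define \<alpha> where "\<alpha> = (5 * d - 2) * (d - 1)"
  define \<beta> where "\<beta> = 2 * N * d * (d - 1) - 4 * d^3 + 9 * d^2 - 7 * d + 2"
  have p2: "clique_coclique_join_poly N d r = (r + d + 1) * g + \<alpha> * r + \<beta>"
    unfolding clique_coclique_join_poly_def g_def \<alpha>_def \<beta>_def by algebra
  have p1: "two_clique_join_poly N d r = clique_coclique_join_poly N d r + (d - 2) * g"
    unfolding two_clique_join_poly_def clique_coclique_join_poly_def g_def by algebra
  have "0 < \<alpha>" using assms(1) by (simp add: \<alpha>_def)
  have "2 * (8 * d - 7) * d * (d - 1) \<le> 2 * N * d * (d - 1)"
    using assms(1,2) by (intro mult_right_mono) auto
  moreover have "2 * (8 * d - 7) * d * (d - 1) - 4 * d^3 + 9 * d^2 - 7 * d + 2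
      = d^2 * (12 * d - 21) + 7 * d + 2"
    by algebra
  moreover have "0 \<le> d^2 * (12 * d - 21)" using assms(1) by simp
  ultimately have "0 < \<beta>" using assms(1) unfolding \<beta>_def by linarith
  with \<open>0 < \<alpha>\<close> assms(3,4) have "(r + d + 1) * g < 0"
    unfolding p2 by (smt (verit) mult_pos_pos)
  then have "g < 0" using assms(1,3) by (simp add: mult_less_0_iff)
  then show ?thesis using assms(1,4) unfolding p1 by (simp add: mult_pos_neg)
qed

lemma two_clique_join_poly_neg_at_0:
  assumes "0 < d" "d < N"
  shows "two_clique_join_poly N d 0 < 0"
  using mult_strict_right_mono[OF assms(2,1)] by (simp add: two_clique_join_poly_def power2_eq_square)

theorem mainTheorem7:
  fixes \<delta> n :: nat
  assumes "\<delta> \<ge> 3" and "n \<ge> 8 * \<delta> - 7"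
  shows "dist_spectral_radius
           (graph_join (complete_graph 2)
              (graph_union (complete_graph (n - \<delta> - 1)) (complete_graph (\<delta> - 1))))
       > dist_spectral_radius
           (graph_join (complete_graph \<delta>)
              (graph_union (complete_graph (n - 2 * \<delta> + 1)) (edgeless_graph (\<delta> - 1))))"
proof -
  define N d where "N = real n" and "d = real \<delta>"
  have d: "3 \<le> d" and N: "8 * d - 7 \<le> N"
    using assms by (auto simp: N_def d_def of_nat_diff simp flip: of_nat_le_iff)
  define \<rho> where "\<rho> = dist_spectral_radius (clique_coclique_join n \<delta>)"
  define t where "t = max \<rho> 0"
  have "two_clique_join_poly N d t < 0"
  proof (cases "0 < \<rho>")
    case True
    then have "clique_coclique_join_poly N d \<rho> = 0"
      using clique_coclique_join_dist_spectral_radius_cases[of \<delta> n] assms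
      unfolding \<rho>_def N_def d_def by fastforce
    then show ?thesis using two_clique_join_poly_neg_at_root d N True by (simp add: t_def)
  qed (use two_clique_join_poly_neg_at_0 d N in \<open>simp add: t_def\<close>)
  moreover have "1 \<le> d" "2 * d \<le> N" using d N by linarith+
  ultimately obtain \<mu> where "t < \<mu>" "two_clique_join_poly N d \<mu> = 0"
    using two_clique_join_poly_root_above by blast
  then have "\<mu> \<le> dist_spectral_radius (two_clique_join n \<delta>)"
    using assms by (intro two_clique_join_le_dist_spectral_radius) (auto simp: t_def N_def d_def)
  with \<open>t < \<mu>\<close> show ?thesis
    unfolding two_clique_join_def clique_coclique_join_def[symmetric] \<rho>_def[symmetric] t_def by simp
qed

end
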